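(* Let $q \in Q$ and $x \in [0,1]^{|N|}$. (i) $v^{\mathrm{tight}}_q(x) \le v^{\mathrm{agg}}_q(x) \le v^{\mathrm{disagg}}_q(x)$. (ii) If $R_q$ consists of a single path, then $v^{\mathrm{agg}}_q(x) = v^{\mathrm{disagg}}_q(x)$. (iii) If $R_q$ consists of a single simple path, then $v^{\mathrm{tight}}_q(x) = v^{\mathrm{agg}}_q(x) = v^{\mathrm{disagg}}_q(x)$.
   Context: Let $G=(N,A)$ be a finite undirected graph with edge lengths $\ell_e > 0$, and let $d>0$ be the travel range, with $\ell_e \le d$ for every edge. A path is a sequence $r=(v_0,v_1,\dots,v_m)$, $m\ge 1$, of nodes in which consecutive nodes are joined by an edge (nodes may repeat); $r$ is simple if its nodes are distinct. For $x \in \{0,1\}^N$ ($x_j = 1$ meaning a charging station at node $j$), path $r$ is repeatedly traversable under $x$ if, letting $W=(v_0,\dots,v_m,v_{m-1},\dots,v_0)$ be the round trip along $r$, at least one node of $r$ has $x_j=1$ and, in the infinite periodic repetition of $W$, the distance travelled between any two consecutive visits to nodes with a station is at most $d$. Let $Q$ be a finite set of demands; each $q\in Q$ has a flow volume $f_q \ge 0$ and a finite nonempty set $R_q$ of paths. For each $q \in Q$ and $r \in R_q$, $\mathcal{D}_{q,r}\subseteq 2^N$ is a family of node sets such that for every $x \in \{0,1\}^N$: $r$ is repeatedly traversable under $x$ if and only if $\sum_{j\in S} x_j \ge 1$ for all $S \in \mathcal{D}_{q,r}$. Define $\mathcal{C}_q = \{ \bigcup_{r \in R_q} S_r : S_r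 \in \mathcal{D}_{q,r} \text{ for each } r \in R_q\}$. For $x \in [0,1]^{|N|}$ define $v^{\mathrm{disagg}}_q(x) = \max\{ \sum_{r \in R_q} f_q z_r : z \in [0,1]^{|R_q|},\ \sum_{r\in R_q} z_r \le 1,\ \sum_{j \in S} x_j \ge z_r \ \forall r \in R_q, S \in \mathcal{D}_{q,r}\}$, $v^{\mathrm{agg}}_q(x) = \max\{ f_q y : y \in [0,1],\ \sum_{j \in S} x_j \ge y \ \forall S \in \mathcal{C}_q\}$. Let $K_q$ be the set of all concave functions $v$ on $[0,1]^{|N|}$ with $v(x') = v^{\mathrm{agg}}_q(x')$ for all $x' \in \{0,1\}^{|N|}$, and $v^{\mathrm{tight}}_q(x) = \inf_{v \in K_q} v(x)$. *)

theory Defs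
  imports "HOL-Analysis.Analysis"
begin

text \<open>Nodes are the elements of a finite type 'n (so N = UNIV and |N| = CARD('n));
  vectors x in R^N are of type real^'n. Undirected simple graph: edges are 2-element node sets.\<close>

definition undirected_graph :: "'n set set \<Rightarrow> bool" where
  "undirected_graph A \<longleftrightarrow> (\<forall>e\<in>A. card e = 2)"

definition is_path :: "'n set set \<Rightarrow> 'n list \<Rightarrow> bool" where
  "is_path A r \<longleftrightarrow> length r \<ge> 2 \<and> (\<forall>i. Suc i < length r \<longrightarrow> {r ! i, r ! Suc i} \<in> A)"

definition simple_path :: "'n set set \<Rightarrow> 'n list \<Rightarrow> bool" where
  "simple_path A r \<longleftrightarrow> is_path A r \<and> distinct r"

definition round_trip :: "'n list \<Rightarrow> 'n list" where
  "round_trip r = r @ tl (rev r)"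

text \<open>k-th node of the infinite periodic repetition of W (period 2m).\<close>
definition walk_node :: "'n list \<Rightarrow> nat \<Rightarrow> 'n" where
  "walk_node r k = round_trip r ! (k mod (2 * (length r - 1)))"

definition travel_dist :: "('n set \<Rightarrow> real) \<Rightarrow> 'n list \<Rightarrow> nat \<Rightarrow> nat \<Rightarrow> real" where
  "travel_dist len r i j = (\<Sum>k\<in>{i..<j}. len {walk_node r k, walk_node r (Suc k)})"

definition rep_traversable :: "('n set \<Rightarrow> real) \<Rightarrow> real \<Rightarrow> real^'n \<Rightarrow> 'n list \<Rightarrow> bool" where
  "rep_traversable len d x r \<longleftrightarrow>
     (\<exists>j\<in>set r. x $ j = 1) \<and>
     (\<forall>i j. i < j \<and> x $ (walk_node r i) = 1 \<and> x $ (walk_node r j) = 1 \<and>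
            (\<forall>k. i < k \<and> k < j \<longrightarrow> x $ (walk_node r k) \<noteq> 1)
        \<longrightarrow> travel_dist len r i j \<le> d)"

definition binary_vec :: "real^'n \<Rightarrow> bool" where
  "binary_vec x \<longleftrightarrow> (\<forall>j. x $ j = 0 \<or> x $ j = 1)"

definition unit_cube :: "(real^'n) set" where
  "unit_cube = {x. \<forall>j. 0 \<le> x $ j \<and> x $ j \<le> 1}"

definition agg_family :: "'p set \<Rightarrow> ('p \<Rightarrow> 'n set set) \<Rightarrow> 'n set set" where
  "agg_family R D = {(\<Union>r\<in>R. S r) | S. \<forall>r\<in>R. S r \<in> D r}"

definition v_disagg :: "real \<Rightarrow> 'p set \<Rightarrow> ('p \<Rightarrow> 'n set set) \<Rightarrow> real^'n \<Rightarrow> real" where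
  "v_disagg f R D x = Sup {(\<Sum>r\<in>R. f * z r) | z.
       (\<forall>r\<in>R. 0 \<le> z r \<and> z r \<le> 1) \<and> (\<Sum>r\<in>R. z r) \<le> 1 \<and>
       (\<forall>r\<in>R. \<forall>S\<in>D r. (\<Sum>j\<in>S. x $ j) \<ge> z r)}"

definition v_agg :: "real \<Rightarrow> 'p set \<Rightarrow> ('p \<Rightarrow> 'n set set) \<Rightarrow> real^'n \<Rightarrow> real" where
  "v_agg f R D x = Sup {f * y | y. 0 \<le> y \<and> y \<le> 1 \<and>
       (\<forall>S\<in>agg_family R D. (\<Sum>j\<in>S. x $ j) \<ge> y)}"

definition K_set :: "real \<Rightarrow> 'p set \<Rightarrow> ('p \<Rightarrow> 'n set set) \<Rightarrow> ((real^'n) \<Rightarrow> real) set" where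
  "K_set f R D = {v. concave_on unit_cube v \<and> (\<forall>x'. binary_vec x' \<longrightarrow> v x' = v_agg f R D x')}"

definition v_tight :: "real \<Rightarrow> 'p set \<Rightarrow> ('p \<Rightarrow> 'n set set) \<Rightarrow> real^'n \<Rightarrow> real" where
  "v_tight f R D x = Inf {v x | v. v \<in> K_set f R D}"

end

theory Submission
  imports Defs
begin

text \<open>
  (i) \<open>v_agg\<close> is concave and agrees with itself on binary points, so it belongs to \<open>K_q\<close>,
  whose members are all nonnegative on the cube; hence \<open>v_tight \<le> v_agg\<close>. If \<open>m_r\<close> is the
  optimum of the single-path problem for \<open>r\<close> and \<open>t\<close> that of the aggregated one, uniting
  minimising sets gives \<open>t \<le> \<Sum>r. m_r\<close>, so \<open>z_r = m_r t / \<Sum>r. m_r\<close> is feasible for the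
  disaggregated problem and \<open>v_agg \<le> v_disagg\<close>.
  (ii) For a single path \<open>C_q = D_(q,r)\<close>.
  (iii) For a simple path \<open>r\<close> and \<open>t = v_agg(x) / f_q > 0\<close> write \<open>x = (1 - t) y + t a\<close> with
  \<open>a_j = min 1 (x_j / t)\<close>. The point \<open>a\<close> is a convex combination of systematic roundings of \<open>a\<close>
  along \<open>r\<close>, which are binary and put a station in every stretch of the path of \<open>a\<close>-mass
  at least 1. If such a rounding were not traversable, removing the stations of some station-free
  stretch would already make \<open>r\<close> untraversable, so that stretch contains a set of \<open>D_(q,r)\<close>,
  has \<open>x\<close>-mass at least \<open>t\<close> and hence \<open>a\<close>-mass at least 1, a contradiction. So every
  rounding has value \<open>f_q\<close>, and concavity gives \<open>v(x) \<ge> t f_q\<close> for all \<open>v \<in> K_q\<close>.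
\<close>

section \<open>Systematic rounding\<close>

lemma floor_add_of_nat_div:
  fixes y :: real and N i :: nat
  assumes N: "N > 0" and i: "i < N"
  shows "\<lfloor>y + real i / real N\<rfloor>
    = \<lfloor>real N * y\<rfloor> div int N + (if int N \<le> int i + \<lfloor>real N * y\<rfloor> mod int N then 1 else 0)"
proof -
  define k where "k = \<lfloor>real N * y\<rfloor>"
  define q where "q = k div int N"
  define s where "s = k mod int N"
  define c where "c = (if int N \<le> int i + s then 1 else 0 :: int)"
  have kqs: "k = int N * q + s" unfolding q_def s_def by simp
  have s: "0 \<le> s" "s < int N" unfolding s_def using N by auto
  have k: "real_of_int k \<le> real N * y" "real N * y < real_of_int k + 1"
    unfolding k_def by linarith+
  have kqs_real: "real_of_int k = real N * real_of_int q + real_of_int s" using kqs by simp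
  have s_real: "0 \<le> real_of_int s" "real_of_int s + 1 \<le> real N" using s by linarith+
  have N_real: "real N > 0" using N by simp
  have i_real: "real i + 1 \<le> real N" using i by linarith
  have c1: "int N \<le> int i + s \<Longrightarrow> real N \<le> real i + real_of_int s" by linarith
  have c0: "\<not> int N \<le> int i + s \<Longrightarrow> real i + real_of_int s + 1 \<le> real N" by linarith
  have lower: "real N * (real_of_int q + real_of_int c) \<le> real N * y + real i"
    using c1 c0 k kqs_real s_real unfolding c_def by (auto simp: algebra_simps)
  have upper: "real N * y + real i < real N * (real_of_int q + real_of_int c + 1)"
    using c1 c0 k kqs_real s_real i_real unfolding c_def by (auto simp: algebra_simps)
  have frac: "y + real i / real N = (real N * y + real i) / real N"
    using N_real by (simp add: field_simps)
  have "\<lfloor>y + real i / real N\<rfloor> = q + c"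
  proof (subst floor_eq_iff, intro conjI)
    show "real_of_int (q + c) \<le> y + real i / real N"
      using lower N_real frac by (simp add: field_simps)
    show "y + real i / real N < real_of_int (q + c) + 1"
      using upper N_real frac by (simp add: field_simps)
  qed
  then show ?thesis unfolding c_def q_def s_def k_def by (simp add: add.commute)
qed

lemma hermite_identity:
  fixes y :: real and N :: nat
  assumes N: "N > 0"
  shows "(\<Sum>i<N. \<lfloor>y + real i / real N\<rfloor>) = \<lfloor>real N * y\<rfloor>"
proof -
  define k where "k = \<lfloor>real N * y\<rfloor>"
  define s where "s = nat (k mod int N)"
  have s: "int s = k mod int N" "s < N" unfolding s_def using N by (auto simp: nat_less_iff)
  have "(\<Sum>i<N. \<lfloor>y + real i / real N\<rfloor>) = (\<Sum>i<N. k div int N + (if i \<in> {N - s..<N} then 1 else 0))"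
    by (rule sum.cong) (use s N floor_add_of_nat_div[OF N] in \<open>auto simp: k_def\<close>)
  also have "\<dots> = int N * (k div int N) + (\<Sum>i<N. if i \<in> {N - s..<N} then 1 else 0)"
    by (simp add: sum.distrib)
  also have "(\<Sum>i<N. if i \<in> {N - s..<N} then 1 else 0 :: int) = int s"
  proof -
    have "{..<N} \<inter> Collect ((\<le>) (N - s)) = {N - s..<N}" by auto
    then show ?thesis using s(2) by (simp add: sum.If_cases)
  qed
  also have "int N * (k div int N) + int s = k" using s by simp
  finally show ?thesis unfolding k_def .
qed

lemma LIMSEQ_floor_mult_Suc_div:
  "(\<lambda>n. real_of_int \<lfloor>real (Suc n) * z\<rfloor> / real (Suc n)) \<longlonglongrightarrow> (z::real)"
proof (rule tendsto_sandwich[of "\<lambda>n. z - inverse (real (Suc n))" _ _ "\<lambda>n. z"])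
  show "\<forall>\<^sub>F n in sequentially. z - inverse (real (Suc n)) \<le> real_of_int \<lfloor>real (Suc n) * z\<rfloor> / real (Suc n)"
  proof (rule always_eventually, rule allI)
    fix n
    have "(real (Suc n) * z - 1) / real (Suc n) \<le> real_of_int \<lfloor>real (Suc n) * z\<rfloor> / real (Suc n)"
      by (intro divide_right_mono) linarith+
    then show "z - inverse (real (Suc n)) \<le> real_of_int \<lfloor>real (Suc n) * z\<rfloor> / real (Suc n)"
      by (simp add: diff_divide_distrib inverse_eq_divide)
  qed
  show "\<forall>\<^sub>F n in sequentially. real_of_int \<lfloor>real (Suc n) * z\<rfloor> / real (Suc n) \<le> z"
    by (rule always_eventually) (simp add: field_simps)
  have "(\<lambda>n. z - inverse (real (Suc n))) \<longlonglongrightarrow> z - 0"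
    by (intro tendsto_intros LIMSEQ_inverse_real_of_nat)
  then show "(\<lambda>n. z - inverse (real (Suc n))) \<longlonglongrightarrow> z" by simp
qed simp

lemma floor_add_le_one_cases:
  fixes y a :: real
  assumes "0 \<le> a" "a \<le> 1"
  shows "\<lfloor>y + a\<rfloor> - \<lfloor>y\<rfloor> = 0 \<or> \<lfloor>y + a\<rfloor> - \<lfloor>y\<rfloor> = 1"
proof -
  have "\<lfloor>y\<rfloor> \<le> \<lfloor>y + a\<rfloor>" "\<lfloor>y + a\<rfloor> \<le> \<lfloor>y + 1\<rfloor>"
    using assms by (intro floor_mono; simp)+
  then show ?thesis by linarith
qed

text \<open>Coordinate \<open>j\<close> is \<open>1\<close> iff an integer lies in \<open>(lo j + u, lo j + a j + u]\<close>;
  averaged over the offset \<open>u\<close> this is \<open>a j\<close>.\<close>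
definition systematic_rounding :: "('n::finite \<Rightarrow> real) \<Rightarrow> ('n \<Rightarrow> real) \<Rightarrow> real \<Rightarrow> real^'n" where
  "systematic_rounding lo a u = (\<chi> j. real_of_int (\<lfloor>lo j + a j + u\<rfloor> - \<lfloor>lo j + u\<rfloor>))"

lemma binary_vec_systematic_rounding:
  assumes "\<forall>j. 0 \<le> a j \<and> a j \<le> 1"
  shows "binary_vec (systematic_rounding lo a u)"
  unfolding binary_vec_def systematic_rounding_def
proof
  fix j
  show "(\<chi> j. real_of_int (\<lfloor>lo j + a j + u\<rfloor> - \<lfloor>lo j + u\<rfloor>)) $ j = 0
      \<or> (\<chi> j. real_of_int (\<lfloor>lo j + a j + u\<rfloor> - \<lfloor>lo j + u\<rfloor>)) $ j = 1"
    using floor_add_le_one_cases[where y = "lo j + u" and a = "a j"] assms by (auto simp: add_ac)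
qed

lemma finite_binary_vecs: "finite {b :: real^'n::finite. binary_vec b}"
proof (rule finite_subset)
  show "{b :: real^'n. binary_vec b} \<subseteq> (\<lambda>T. \<chi> j. if j \<in> T then 1 else 0) ` UNIV"
  proof
    fix b :: "real^'n" assume "b \<in> {b. binary_vec b}"
    then have "b = (\<chi> j. if j \<in> {j. b $ j = 1} then 1 else 0)"
      unfolding binary_vec_def by (auto simp: vec_eq_iff)
    then show "b \<in> (\<lambda>T. \<chi> j. if j \<in> T then 1 else 0) ` UNIV" by blast
  qed
qed simp

lemma systematic_rounding_average_component:
  assumes N: "N > 0"
  shows "(\<Sum>i<N. (1 / real N) *\<^sub>R systematic_rounding lo a (real i / real N)) $ j
    = (real_of_int \<lfloor>real N * (lo j + a j)\<rfloor> - real_of_int \<lfloor>real N * lo j\<rfloor>) / real N"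
proof -
  have "(\<Sum>i<N. (1 / real N) *\<^sub>R systematic_rounding lo a (real i / real N)) $ j
      = (1 / real N) * (\<Sum>i<N. real_of_int (\<lfloor>lo j + a j + real i / real N\<rfloor> - \<lfloor>lo j + real i / real N\<rfloor>))"
    unfolding systematic_rounding_def
    by (simp only: sum_component vector_scaleR_component vec_lambda_beta sum_distrib_left real_scaleR_def)
  also have "(\<Sum>i<N. real_of_int (\<lfloor>lo j + a j + real i / real N\<rfloor> - \<lfloor>lo j + real i / real N\<rfloor>))
      = real_of_int ((\<Sum>i<N. \<lfloor>lo j + a j + real i / real N\<rfloor>) - (\<Sum>i<N. \<lfloor>lo j + real i / real N\<rfloor>))"
    by (simp add: sum_subtractf)
  also have "\<dots> = real_of_int \<lfloor>real N * (lo j + a j)\<rfloor> - real_of_int \<lfloor>real N * lo j\<rfloor>"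
    using hermite_identity[OF N, of "lo j + a j"] hermite_identity[OF N, of "lo j"] by simp
  finally show ?thesis by simp
qed

text \<open>By the previous lemma the averages over the offsets \<open>u = i / N\<close> tend to \<open>a\<close>, and the
  hull of the finitely many roundings is closed.\<close>
lemma mem_convex_hull_systematic_rounding:
  fixes lo a :: "'n::finite \<Rightarrow> real"
  assumes a: "\<forall>j. 0 \<le> a j \<and> a j \<le> 1"
  shows "(\<chi> j. a j) \<in> convex hull (systematic_rounding lo a ` {0..<1})"
proof -
  define B where "B = systematic_rounding lo a ` {0..<1}"
  have "B \<subseteq> {b. binary_vec b}"
    unfolding B_def using binary_vec_systematic_rounding[OF a] by blast
  then have "finite B" using finite_binary_vecs finite_subset by blast
  then have closed: "closed (convex hull B)"
    by (simp add: compact_imp_closed compact_convex_hull finite_imp_compact)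
  define c where
    "c n = (\<Sum>i<Suc n. (1 / real (Suc n)) *\<^sub>R systematic_rounding lo a (real i / real (Suc n)))" for n
  have c_hull: "c n \<in> convex hull B" for n
    unfolding c_def
  proof (rule convex_sum)
    show "systematic_rounding lo a (real i / real (Suc n)) \<in> convex hull B" if "i \<in> {..<Suc n}" for i
      using that unfolding B_def by (intro hull_inc imageI) (auto simp: field_simps)
  qed auto
  have "c \<longlonglongrightarrow> (\<chi> j. a j)"
  proof (rule vec_tendstoI)
    fix j
    have "(\<lambda>n. real_of_int \<lfloor>real (Suc n) * (lo j + a j)\<rfloor> / real (Suc n)
        - real_of_int \<lfloor>real (Suc n) * lo j\<rfloor> / real (Suc n)) \<longlonglongrightarrow> (lo j + a j) - lo j"
      by (intro tendsto_intros LIMSEQ_floor_mult_Suc_div)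
    then show "(\<lambda>n. c n $ j) \<longlonglongrightarrow> (\<chi> j. a j) $ j"
      unfolding c_def systematic_rounding_average_component[OF zero_less_Suc]
      by (simp add: diff_divide_distrib)
  qed
  with closed c_hull show ?thesis
    unfolding B_def using closed_sequentially by blast
qed

section \<open>Concave functions on the unit cube\<close>

lemma unit_cube_eq_cbox: "unit_cube = cbox (0::real^'n::finite) 1"
  unfolding unit_cube_def by (rule set_eqI) (simp add: mem_box_cart)

lemma convex_unit_cube: "convex (unit_cube :: (real^'n::finite) set)"
  unfolding unit_cube_eq_cbox by simp

lemma binary_vec_in_unit_cube:
  assumes "binary_vec b"
  shows "b \<in> unit_cube"
proof -
  have "0 \<le> b $ j \<and> b $ j \<le> 1" for j
    using assms unfolding binary_vec_def by (metis order_refl zero_le_one)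
  then show ?thesis unfolding unit_cube_def by simp
qed

lemma concave_on_unit_cube_hull_lower:
  fixes v :: "real^'n::finite \<Rightarrow> real"
  assumes v: "concave_on unit_cube v" and B: "B \<subseteq> unit_cube" and lower: "\<forall>b\<in>B. m \<le> v b"
    and y: "y \<in> convex hull B"
  shows "m \<le> v y"
proof -
  have "convex_on unit_cube (\<lambda>x. - v x)" using v unfolding concave_on_def .
  moreover have "convex hull B \<subseteq> unit_cube"
    by (rule hull_minimal) (use B convex_unit_cube in auto)
  ultimately have "convex_on (convex hull B) (\<lambda>x. - v x)"
    by (rule convex_on_subset) simp_all
  from convex_on_convex_hull_bound[OF this, of "- m"] lower y show ?thesis by auto
qed

lemma concave_on_unit_cube_hull_systematic_rounding:
  fixes v :: "real^'n::finite \<Rightarrow> real"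
  assumes v: "concave_on unit_cube v" and a: "\<forall>j. 0 \<le> a j \<and> a j \<le> 1"
    and lower: "\<forall>u\<in>{0..<1}. m \<le> v (systematic_rounding lo a u)"
  shows "m \<le> v (\<chi> j. a j)"
  using binary_vec_systematic_rounding[OF a] binary_vec_in_unit_cube lower
  by (intro concave_on_unit_cube_hull_lower[OF v _ _ mem_convex_hull_systematic_rounding[OF a]]) auto

lemma concave_on_unit_cube_nonneg:
  fixes v :: "real^'n::finite \<Rightarrow> real"
  assumes v: "concave_on unit_cube v" and binary: "\<forall>b. binary_vec b \<longrightarrow> 0 \<le> v b"
    and y: "y \<in> unit_cube"
  shows "0 \<le> v y"
proof -
  have "0 \<le> v (\<chi> j. y $ j)"
  proof (rule concave_on_unit_cube_hull_systematic_rounding[OF v, where lo = "\<lambda>_. 0"])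
    show a: "\<forall>j. 0 \<le> y $ j \<and> y $ j \<le> 1" using y unfolding unit_cube_def by simp
    show "\<forall>u\<in>{0..<1}. 0 \<le> v (systematic_rounding (\<lambda>_. 0) (($) y) u)"
      using binary binary_vec_systematic_rounding[OF a] by blast
  qed
  then show ?thesis by simp
qed

section \<open>Covering levels and the value functions\<close>

definition covering_level :: "'n::finite set set \<Rightarrow> real^'n \<Rightarrow> real" where
  "covering_level C y = Min (insert 1 ((\<lambda>S. \<Sum>j\<in>S. y $ j) ` C))"

lemma covering_level_le_one: "covering_level C y \<le> 1"
  unfolding covering_level_def by (intro Min_le) auto

lemma covering_level_le_sum: "S \<in> C \<Longrightarrow> covering_level C y \<le> (\<Sum>j\<in>S. y $ j)"
  unfolding covering_level_def by (intro Min_le) auto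

lemma covering_level_greatest:
  "z \<le> 1 \<Longrightarrow> \<forall>S\<in>C. z \<le> (\<Sum>j\<in>S. y $ j) \<Longrightarrow> z \<le> covering_level C y"
  unfolding covering_level_def by auto

lemma covering_level_nonneg: "y \<in> unit_cube \<Longrightarrow> 0 \<le> covering_level C y"
  unfolding unit_cube_def by (intro covering_level_greatest) (auto intro: sum_nonneg)

lemma covering_level_eq_one: "\<forall>S\<in>C. 1 \<le> (\<Sum>j\<in>S. y $ j) \<Longrightarrow> covering_level C y = 1"
  using covering_level_le_one covering_level_greatest by (metis order_refl order_antisym)

lemma covering_level_attained:
  assumes "covering_level C y < 1"
  shows "\<exists>S\<in>C. (\<Sum>j\<in>S. y $ j) = covering_level C y"
proof -
  have "covering_level C y \<in> insert 1 ((\<lambda>S. \<Sum>j\<in>S. y $ j) ` C)"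
    unfolding covering_level_def by (intro Min_in) auto
  then show ?thesis using assms by auto
qed

lemma concave_on_covering_level:
  fixes C :: "'n::finite set set"
  shows "concave_on unit_cube (covering_level C)"
  unfolding concave_on_iff
proof (intro conjI ballI allI impI convex_unit_cube)
  fix a b :: "real^'n" and u w :: real
  assume ab: "a \<in> unit_cube" "b \<in> unit_cube" and uw: "0 \<le> u" "0 \<le> w" "u + w = 1"
  show "u * covering_level C a + w * covering_level C b \<le> covering_level C (u *\<^sub>R a + w *\<^sub>R b)"
  proof (rule covering_level_greatest)
    have "u * covering_level C a \<le> u" "w * covering_level C b \<le> w"
      using covering_level_le_one uw by (auto intro: mult_left_le)
    then show "u * covering_level C a + w * covering_level C b \<le> 1" using uw by linarith
    show "\<forall>S\<in>C. u * covering_level C a + w * covering_level C b \<le> (\<Sum>j\<in>S. (u *\<^sub>R a + w *\<^sub>R b) $ j)"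
    proof
      fix S assume S: "S \<in> C"
      have "u * covering_level C a \<le> u * (\<Sum>j\<in>S. a $ j)" "w * covering_level C b \<le> w * (\<Sum>j\<in>S. b $ j)"
        using covering_level_le_sum[OF S] uw by (simp_all add: mult_left_mono)
      then show "u * covering_level C a + w * covering_level C b \<le> (\<Sum>j\<in>S. (u *\<^sub>R a + w *\<^sub>R b) $ j)"
        by (simp add: sum.distrib sum_distrib_left)
    qed
  qed
qed

lemma concave_on_cong:
  assumes "\<And>x. x \<in> S \<Longrightarrow> f x = g x"
  shows "concave_on S f \<longleftrightarrow> concave_on S g"
  using assms by (auto simp: concave_on_iff convex_def)

lemma v_agg_eq_covering_level:
  assumes F: "0 \<le> F" and y: "y \<in> unit_cube"
  shows "v_agg F R D y = F * covering_level (agg_family R D) y"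
  unfolding v_agg_def
proof (rule cSup_eq_maximum)
  show "F * covering_level (agg_family R D) y
      \<in> {F * z |z. 0 \<le> z \<and> z \<le> 1 \<and> (\<forall>S\<in>agg_family R D. z \<le> (\<Sum>j\<in>S. y $ j))}"
    using covering_level_nonneg[OF y] covering_level_le_one covering_level_le_sum by blast
  show "w \<le> F * covering_level (agg_family R D) y"
    if "w \<in> {F * z |z. 0 \<le> z \<and> z \<le> 1 \<and> (\<forall>S\<in>agg_family R D. z \<le> (\<Sum>j\<in>S. y $ j))}" for w
    using that covering_level_greatest F by (auto intro: mult_left_mono)
qed

lemma concave_on_v_agg:
  assumes "0 \<le> F"
  shows "concave_on unit_cube (v_agg F R D)"
proof -
  have "concave_on unit_cube (\<lambda>y. F * covering_level (agg_family R D) y)"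
    using assms concave_on_covering_level by blast
  moreover have "concave_on unit_cube (v_agg F R D)
      \<longleftrightarrow> concave_on unit_cube (\<lambda>y. F * covering_level (agg_family R D) y)"
    by (rule concave_on_cong) (rule v_agg_eq_covering_level[OF assms])
  ultimately show ?thesis by simp
qed

lemma agg_family_singleton: "agg_family {r} D = D r"
proof (intro set_eqI iffI)
  show "T \<in> D r" if "T \<in> agg_family {r} D" for T
    using that unfolding agg_family_def by auto
  show "T \<in> agg_family {r} D" if "T \<in> D r" for T
    using that unfolding agg_family_def by (intro CollectI exI[of _ "\<lambda>_. T"]) auto
qed

lemma v_disagg_singleton:
  assumes F: "0 \<le> F" and y: "y \<in> unit_cube"
  shows "v_disagg F {r} D y = F * covering_level (D r) y"
  unfolding v_disagg_def
proof (rule cSup_eq_maximum)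
  let ?X = "{(\<Sum>r\<in>{r}. F * z r) |z. (\<forall>r\<in>{r}. 0 \<le> z r \<and> z r \<le> 1) \<and> (\<Sum>r\<in>{r}. z r) \<le> 1
      \<and> (\<forall>r\<in>{r}. \<forall>S\<in>D r. z r \<le> (\<Sum>j\<in>S. y $ j))}"
  show "F * covering_level (D r) y \<in> ?X"
    using covering_level_nonneg[OF y] covering_level_le_one covering_level_le_sum
    by (intro CollectI exI[of _ "\<lambda>_. covering_level (D r) y"]) auto
  show "w \<le> F * covering_level (D r) y" if "w \<in> ?X" for w
    using that covering_level_greatest F by (auto intro: mult_left_mono)
qed

lemma v_agg_eq_v_disagg_singleton:
  assumes "0 \<le> F" "y \<in> unit_cube"
  shows "v_agg F {r} D y = v_disagg F {r} D y"
  using v_agg_eq_covering_level[OF assms, where R = "{r}" and D = D]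
    v_disagg_singleton[OF assms, where r = r and D = D] agg_family_singleton[of r D]
  by simp

lemma sum_UNION_le:
  fixes y :: "'a \<Rightarrow> real"
  assumes "finite R" "\<And>r. r \<in> R \<Longrightarrow> finite (S r)" "\<And>j. 0 \<le> y j"
  shows "(\<Sum>j\<in>(\<Union>r\<in>R. S r). y j) \<le> (\<Sum>r\<in>R. \<Sum>j\<in>S r. y j)"
  using assms(1,2)
proof (induction R rule: finite_induct)
  case (insert a R)
  have "(\<Sum>j\<in>S a \<union> (\<Union>r\<in>R. S r). y j) \<le> (\<Sum>j\<in>S a. y j) + (\<Sum>j\<in>(\<Union>r\<in>R. S r). y j)"
    using insert sum_Un[of "S a" "\<Union>r\<in>R. S r" y] sum_nonneg[of "S a \<inter> (\<Union>r\<in>R. S r)" y] assms(3)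
    by simp
  then show ?case using insert by simp
qed simp

text \<open>Uniting sets of the \<open>D r\<close> attaining the individual levels gives a member of the
  aggregated family.\<close>
lemma covering_level_agg_family_le_sum:
  assumes R: "finite R" and y: "y \<in> unit_cube"
  shows "covering_level (agg_family R D) y \<le> (\<Sum>r\<in>R. covering_level (D r) y)"
proof (cases "\<exists>r\<in>R. covering_level (D r) y = 1")
  case True
  then obtain r where r: "r \<in> R" "covering_level (D r) y = 1" by blast
  have "covering_level (D r) y \<le> (\<Sum>r\<in>R. covering_level (D r) y)"
    using R r(1) covering_level_nonneg[OF y] by (intro member_le_sum) auto
  then show ?thesis using r(2) covering_level_le_one order_trans by metis
next
  case False
  then have "\<forall>r\<in>R. \<exists>S\<in>D r. (\<Sum>j\<in>S. y $ j) = covering_level (D r) y"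
    using covering_level_le_one covering_level_attained by (metis order_less_le)
  then obtain S where S: "\<And>r. r \<in> R \<Longrightarrow> S r \<in> D r \<and> (\<Sum>j\<in>S r. y $ j) = covering_level (D r) y"
    by metis
  then have "(\<Union>r\<in>R. S r) \<in> agg_family R D" unfolding agg_family_def by blast
  then have "covering_level (agg_family R D) y \<le> (\<Sum>j\<in>(\<Union>r\<in>R. S r). y $ j)"
    by (rule covering_level_le_sum)
  also have "\<dots> \<le> (\<Sum>r\<in>R. \<Sum>j\<in>S r. y $ j)"
    using R y unfolding unit_cube_def by (intro sum_UNION_le) auto
  also have "\<dots> = (\<Sum>r\<in>R. covering_level (D r) y)" using S by simp
  finally show ?thesis .
qed

lemma v_disagg_ge_feasible:
  assumes F: "0 \<le> F" and z: "\<forall>r\<in>R. 0 \<le> z r \<and> z r \<le> 1" "(\<Sum>r\<in>R. z r) \<le> 1"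
    "\<forall>r\<in>R. \<forall>S\<in>D r. z r \<le> (\<Sum>j\<in>S. y $ j)"
  shows "(\<Sum>r\<in>R. F * z r) \<le> v_disagg F R D y"
  unfolding v_disagg_def
proof (rule cSup_upper)
  show "(\<Sum>r\<in>R. F * z r) \<in> {(\<Sum>r\<in>R. F * z r) |z. (\<forall>r\<in>R. 0 \<le> z r \<and> z r \<le> 1)
      \<and> (\<Sum>r\<in>R. z r) \<le> 1 \<and> (\<forall>r\<in>R. \<forall>S\<in>D r. z r \<le> (\<Sum>j\<in>S. y $ j))}"
    using z by blast
  show "bdd_above {(\<Sum>r\<in>R. F * z r) |z. (\<forall>r\<in>R. 0 \<le> z r \<and> z r \<le> 1)
      \<and> (\<Sum>r\<in>R. z r) \<le> 1 \<and> (\<forall>r\<in>R. \<forall>S\<in>D r. z r \<le> (\<Sum>j\<in>S. y $ j))}"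
  proof (rule bdd_aboveI, elim CollectE exE conjE)
    fix w z' assume "w = (\<Sum>r\<in>R. F * z' r)" "(\<Sum>r\<in>R. z' r) \<le> 1"
    then show "w \<le> F" using F by (simp add: mult_left_le flip: sum_distrib_left)
  qed
qed

lemma v_agg_le_v_disagg:
  assumes R: "finite R" and F: "0 \<le> F" and y: "y \<in> unit_cube"
  shows "v_agg F R D y \<le> v_disagg F R D y"
proof -
  define t where "t = covering_level (agg_family R D) y"
  define m where "m r = covering_level (D r) y" for r
  define M where "M = (\<Sum>r\<in>R. m r)"
  \<comment> \<open>If \<open>M = 0\<close> then \<open>t = 0\<close>, and \<open>z = 0\<close> since division by zero yields zero.\<close>
  define z where "z r = m r * t / M" for r
  have m: "0 \<le> m r" "m r \<le> 1" for r
    unfolding m_def using covering_level_nonneg[OF y] covering_level_le_one by auto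
  have t: "0 \<le> t" "t \<le> 1" "t \<le> M"
    unfolding t_def M_def m_def
    using covering_level_nonneg[OF y] covering_level_le_one covering_level_agg_family_le_sum[OF R y]
    by auto
  have M: "0 \<le> M" unfolding M_def using m by (simp add: sum_nonneg)
  have sum_z: "(\<Sum>r\<in>R. z r) = t"
    using t M by (cases "M = 0") (auto simp: z_def M_def sum_divide_distrib[symmetric] sum_distrib_right[symmetric])
  have z: "0 \<le> z r" "z r \<le> m r" for r
  proof -
    show "0 \<le> z r" unfolding z_def using m t M by simp
    have "m r * t \<le> m r * M" using t m by (intro mult_left_mono) auto
    then show "z r \<le> m r" unfolding z_def using M m
      by (cases "M = 0") (auto simp: divide_le_eq)
  qed
  have "v_agg F R D y = F * t" unfolding t_def by (rule v_agg_eq_covering_level[OF F y])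
  also have "\<dots> = (\<Sum>r\<in>R. F * z r)" using sum_z by (simp add: sum_distrib_left[symmetric])
  also have "\<dots> \<le> v_disagg F R D y"
  proof (rule v_disagg_ge_feasible[OF F])
    show "\<forall>r\<in>R. 0 \<le> z r \<and> z r \<le> 1" using z m order_trans by blast
    show "(\<Sum>r\<in>R. z r) \<le> 1" using sum_z t by simp
    show "\<forall>r\<in>R. \<forall>S\<in>D r. z r \<le> (\<Sum>j\<in>S. y $ j)"
      using z covering_level_le_sum unfolding m_def by (meson order_trans)
  qed
  finally show ?thesis .
qed

lemma K_set_nonneg:
  fixes v :: "real^'n::finite \<Rightarrow> real"
  assumes v: "v \<in> K_set F R D" and F: "0 \<le> F" and y: "y \<in> unit_cube"
  shows "0 \<le> v y"
proof (rule concave_on_unit_cube_nonneg[OF _ _ y])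
  show "concave_on unit_cube v" using v unfolding K_set_def by simp
  show "\<forall>b. binary_vec b \<longrightarrow> 0 \<le> v b"
  proof (intro allI impI)
    fix b :: "real^'n" assume b: "binary_vec b"
    then have "v b = F * covering_level (agg_family R D) b"
      using v v_agg_eq_covering_level[OF F binary_vec_in_unit_cube] unfolding K_set_def by simp
    then show "0 \<le> v b" using F covering_level_nonneg[OF binary_vec_in_unit_cube[OF b]] by simp
  qed
qed

lemma v_agg_in_K_set: "0 \<le> F \<Longrightarrow> v_agg F R D \<in> K_set F R D"
  unfolding K_set_def using concave_on_v_agg by blast

lemma bdd_below_K_set_values:
  "0 \<le> F \<Longrightarrow> y \<in> unit_cube \<Longrightarrow> bdd_below {v y |v. v \<in> K_set F R D}"
  using K_set_nonneg by (intro bdd_belowI[of _ 0]) blast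

lemma v_agg_mem_K_set_values:
  "0 \<le> F \<Longrightarrow> v_agg F R D y \<in> {v y |v. v \<in> K_set F R D}"
  using v_agg_in_K_set by blast

lemma v_tight_le_v_agg:
  assumes "0 \<le> F" "y \<in> unit_cube"
  shows "v_tight F R D y \<le> v_agg F R D y"
  unfolding v_tight_def
  using v_agg_mem_K_set_values[OF assms(1)] bdd_below_K_set_values[OF assms] by (rule cInf_lower)

lemma v_tight_eq_v_agg:
  assumes "0 \<le> F" and "\<And>v. v \<in> K_set F R D \<Longrightarrow> v_agg F R D y \<le> v y"
  shows "v_tight F R D y = v_agg F R D y"
  unfolding v_tight_def
  using v_agg_mem_K_set_values[OF assms(1)] by (rule cInf_eq_minimum) (use assms(2) in blast)

section \<open>Station-free stretches of a round trip\<close>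

definition bounce_index :: "nat \<Rightarrow> nat \<Rightarrow> nat" where
  "bounce_index m k = (if k mod (2 * m) \<le> m then k mod (2 * m) else 2 * m - k mod (2 * m))"

lemma bounce_index_le: "bounce_index m k \<le> m"
  unfolding bounce_index_def by auto

lemma bounce_index_Suc:
  assumes "1 \<le> m"
  shows "bounce_index m (Suc k) \<le> Suc (bounce_index m k)" "bounce_index m k \<le> Suc (bounce_index m (Suc k))"
proof -
  have "Suc k mod (2 * m) = (if Suc (k mod (2 * m)) = 2 * m then 0 else Suc (k mod (2 * m)))"
    by (rule mod_Suc)
  moreover have "k mod (2 * m) < 2 * m" using assms by simp
  ultimately show "bounce_index m (Suc k) \<le> Suc (bounce_index m k)"
    "bounce_index m k \<le> Suc (bounce_index m (Suc k))"
    unfolding bounce_index_def using assms by auto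
qed

lemma walk_node_eq_nth_bounce_index:
  assumes "2 \<le> length r"
  shows "walk_node r k = r ! bounce_index (length r - 1) k"
proof -
  define m where "m = length r - 1"
  define p where "p = k mod (2 * m)"
  have m: "1 \<le> m" "length r = Suc m" using assms unfolding m_def by auto
  have p: "p < 2 * m" unfolding p_def using m by simp
  have "round_trip r ! p = r ! (if p \<le> m then p else 2 * m - p)"
  proof (cases "p \<le> m")
    case True
    then show ?thesis unfolding round_trip_def using m by (simp add: nth_append)
  next
    case False
    then have "round_trip r ! p = tl (rev r) ! (p - Suc m)"
      unfolding round_trip_def using m by (simp add: nth_append)
    also have "\<dots> = rev r ! Suc (p - Suc m)"
      using m p False by (simp add: nth_tl)
    also have "\<dots> = r ! (length r - Suc (Suc (p - Suc m)))"
      using m p False by (intro rev_nth) simp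
    also have "length r - Suc (Suc (p - Suc m)) = 2 * m - p" using m p False by simp
    finally show ?thesis using False by simp
  qed
  then show ?thesis unfolding walk_node_def bounce_index_def p_def m_def by simp
qed

lemma image_atLeastLessThan_unit_steps:
  fixes g :: "nat \<Rightarrow> nat"
  assumes up: "\<And>k. g (Suc k) \<le> Suc (g k)" and down: "\<And>k. g k \<le> Suc (g (Suc k))"
  shows "\<exists>l h. l \<le> h \<and> g ` {a..<b} = {l..<h}"
proof (induction b)
  case 0
  show ?case by (intro exI[of _ 0]) simp
next
  case (Suc b)
  show ?case
  proof (cases "a < b")
    case True
    obtain l h where lh: "l \<le> h" "g ` {a..<b} = {l..<h}" using Suc.IH by blast
    have "b - 1 \<in> {a..<b}" using True by auto
    then have "g (b - 1) \<in> {l..<h}" using lh(2) by blast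
    moreover have "g b \<le> Suc (g (b - 1))" "g (b - 1) \<le> Suc (g b)"
      using up[of "b - 1"] down[of "b - 1"] True by simp_all
    ultimately have "insert (g b) {l..<h} = {min l (g b)..<max h (Suc (g b))}" by auto
    moreover have "{a..<Suc b} = insert b {a..<b}" using True by auto
    ultimately show ?thesis using lh by (intro exI[of _ "min l (g b)"] exI[of _ "max h (Suc (g b))"]) auto
  next
    case False
    show ?thesis
    proof (cases "a = b")
      case True
      then have "g ` {a..<Suc b} = {g b..<Suc (g b)}" by simp
      then show ?thesis by (intro exI[of _ "g b"] exI[of _ "Suc (g b)"]) simp
    next
      case False
      then have "g ` {a..<Suc b} = {0..<0}" using \<open>\<not> a < b\<close> by simp
      then show ?thesis by (intro exI[of _ 0] exI[of _ 0]) simp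
    qed
  qed
qed

lemma bounce_index_image_atLeastLessThan:
  assumes "1 \<le> m"
  obtains l h where "l \<le> h" "h \<le> Suc m" "bounce_index m ` {a..<b} = {l..<h}"
proof -
  obtain l h where lh: "l \<le> h" "bounce_index m ` {a..<b} = {l..<h}"
    using image_atLeastLessThan_unit_steps[of "bounce_index m", OF bounce_index_Suc[OF assms]] by blast
  show ?thesis
  proof (cases "l < h")
    case True
    then have "h - 1 \<in> bounce_index m ` {a..<b}" using lh(2) by auto
    then have "h - 1 \<le> m" using bounce_index_le by auto
    then show ?thesis using that[OF lh(1) _ lh(2)] True by linarith
  next
    case False
    then show ?thesis using that[of 0 0] lh by simp
  qed
qed

lemma not_rep_traversable_window:
  fixes b :: "real^'n::finite"
  assumes r: "2 \<le> length r" and not_trav: "\<not> rep_traversable len d b r"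
  obtains l h where "l \<le> h" "h \<le> length r" "\<forall>k\<in>{l..<h}. b $ (r ! k) \<noteq> 1"
    "\<not> rep_traversable len d (\<chi> j. if j \<in> (!) r ` {l..<h} then 0 else 1) r"
proof (cases "\<exists>j\<in>set r. b $ j = 1")
  case False
  have "(!) r ` {0..<length r} = set r" by (auto simp: set_conv_nth)
  then show ?thesis
    using False by (intro that[of 0 "length r"]) (auto simp: rep_traversable_def)
next
  case True
  define g where "g = bounce_index (length r - 1)"
  have walk: "walk_node r k = r ! g k" for k
    unfolding g_def by (rule walk_node_eq_nth_bounce_index[OF r])
  have g_less: "g k < length r" for k
    using bounce_index_le[of "length r - 1" k] r unfolding g_def by linarith
  have "\<not> (\<forall>i j. i < j \<and> b $ walk_node r i = 1 \<and> b $ walk_node r j = 1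
      \<and> (\<forall>k. i < k \<and> k < j \<longrightarrow> b $ walk_node r k \<noteq> 1) \<longrightarrow> travel_dist len r i j \<le> d)"
    using True not_trav unfolding rep_traversable_def by simp
  then obtain i j where ij: "i < j" "b $ walk_node r i = 1" "b $ walk_node r j = 1"
    and between: "\<forall>k. i < k \<and> k < j \<longrightarrow> b $ walk_node r k \<noteq> 1"
    and far: "\<not> travel_dist len r i j \<le> d"
    by blast
  have "1 \<le> length r - 1" using r by simp
  then obtain l h where lh: "l \<le> h" "h \<le> Suc (length r - 1)" and window: "g ` {Suc i..<j} = {l..<h}"
    unfolding g_def by (rule bounce_index_image_atLeastLessThan)
  define e :: "real^'n" where "e = (\<chi> j. if j \<in> (!) r ` {l..<h} then 0 else 1)"
  have no_station: "\<forall>k\<in>{l..<h}. b $ (r ! k) \<noteq> 1"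
    using window[symmetric] between walk by auto
  have "e $ walk_node r i = 1" "e $ walk_node r j = 1"
    using ij(2,3) no_station unfolding e_def by (auto simp: walk)
  moreover have "\<forall>k. i < k \<and> k < j \<longrightarrow> e $ walk_node r k \<noteq> 1"
    using window[symmetric] unfolding e_def walk by auto
  ultimately have "\<not> rep_traversable len d e r"
    using ij(1) far unfolding rep_traversable_def by blast
  moreover have "h \<le> length r" using lh(2) r by simp
  ultimately show ?thesis using that lh(1) no_station unfolding e_def by blast
qed

section \<open>Rounding along a simple path\<close>

text \<open>Prefix mass of \<open>a\<close> along \<open>r\<close> before node \<open>j\<close>.\<close>
definition path_offset :: "'n list \<Rightarrow> ('n \<Rightarrow> real) \<Rightarrow> 'n \<Rightarrow> real" where
  "path_offset r a j = (\<Sum>k < the_inv_into {..<length r} ((!) r) j. a (r ! k))"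

lemma path_offset_nth:
  assumes "distinct r" "k < length r"
  shows "path_offset r a (r ! k) = (\<Sum>k'<k. a (r ! k'))"
  using assms unfolding path_offset_def by (simp add: the_inv_into_f_f inj_on_nth)

lemma systematic_rounding_hits_heavy_window:
  fixes a :: "'n::finite \<Rightarrow> real"
  assumes r: "distinct r" and a: "\<forall>j. 0 \<le> a j \<and> a j \<le> 1"
    and lh: "l \<le> h" "h \<le> length r" and heavy: "1 \<le> (\<Sum>k\<in>{l..<h}. a (r ! k))"
  shows "\<exists>k\<in>{l..<h}. systematic_rounding (path_offset r a) a u $ (r ! k) = 1"
proof (rule ccontr)
  define P where "P k = (\<Sum>k'<k. a (r ! k'))" for k
  define b where "b = systematic_rounding (path_offset r a) a u"
  assume "\<not> ?thesis"
  then have "b $ (r ! k) = 0" if "k \<in> {l..<h}" for k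
    using that binary_vec_systematic_rounding[OF a] unfolding b_def binary_vec_def by blast
  then have "(\<Sum>k\<in>{l..<h}. b $ (r ! k)) = 0" by simp
  moreover have "(\<Sum>k\<in>{l..<h}. b $ (r ! k))
      = (\<Sum>k\<in>{l..<h}. real_of_int \<lfloor>P (Suc k) + u\<rfloor> - real_of_int \<lfloor>P k + u\<rfloor>)"
    using lh path_offset_nth[OF r] unfolding b_def systematic_rounding_def P_def
    by (intro sum.cong) auto
  also have "\<dots> = real_of_int \<lfloor>P h + u\<rfloor> - real_of_int \<lfloor>P l + u\<rfloor>"
    using lh(1) by (rule sum_Suc_diff'[where f = "\<lambda>k. real_of_int \<lfloor>P k + u\<rfloor>"])
  moreover have "(\<Sum>k\<in>{l..<h}. a (r ! k)) = P h - P l"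
    using sum_Suc_diff'[OF lh(1), of P] by (simp add: P_def)
  then have "\<lfloor>P l + u\<rfloor> + 1 \<le> \<lfloor>P h + u\<rfloor>"
    using heavy floor_mono[of "P l + u + 1" "P h + u"] by simp
  ultimately show False by linarith
qed

lemma sum_min_one_div_ge_one:
  fixes x :: "'a \<Rightarrow> real"
  assumes "finite K" "0 < t" "\<forall>k\<in>K. 0 \<le> x k" "t \<le> (\<Sum>k\<in>K. x k)"
  shows "1 \<le> (\<Sum>k\<in>K. min 1 (x k / t))"
proof (cases "\<exists>k\<in>K. t \<le> x k")
  case True
  then obtain k where k: "k \<in> K" "t \<le> x k" by blast
  then have "min 1 (x k / t) = 1" using assms(2) by simp
  moreover have "min 1 (x k / t) \<le> (\<Sum>k\<in>K. min 1 (x k / t))"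
    using k(1) assms by (intro member_le_sum) auto
  ultimately show ?thesis by simp
next
  case False
  then have "(\<Sum>k\<in>K. min 1 (x k / t)) = (\<Sum>k\<in>K. x k) / t"
    using assms(2) by (auto simp: sum_divide_distrib intro!: sum.cong)
  then show ?thesis using assms(2,4) by simp
qed

lemma rep_traversable_systematic_rounding:
  fixes Dr :: "'n::finite set set" and x :: "real^'n"
  assumes r: "2 \<le> length r" "distinct r"
    and Dr: "\<forall>x'. binary_vec x' \<longrightarrow> (rep_traversable len d x' r \<longleftrightarrow> (\<forall>S\<in>Dr. 1 \<le> (\<Sum>j\<in>S. x' $ j)))"
    and x: "x \<in> unit_cube" and t: "0 < covering_level Dr x"
  defines "a \<equiv> \<lambda>j. min 1 (x $ j / covering_level Dr x)"
  shows "rep_traversable len d (systematic_rounding (path_offset r a) a u) r"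
proof (rule ccontr)
  let ?t = "covering_level Dr x"
  have x01: "0 \<le> x $ j" "x $ j \<le> 1" for j using x unfolding unit_cube_def by auto
  have a: "\<forall>j. 0 \<le> a j \<and> a j \<le> 1" unfolding a_def using x01 t by simp
  assume "\<not> rep_traversable len d (systematic_rounding (path_offset r a) a u) r"
  then obtain l h where lh: "l \<le> h" "h \<le> length r"
    and no_station: "\<forall>k\<in>{l..<h}. systematic_rounding (path_offset r a) a u $ (r ! k) \<noteq> 1"
    and gap: "\<not> rep_traversable len d (\<chi> j. if j \<in> (!) r ` {l..<h} then 0 else 1) r"
    using not_rep_traversable_window[OF r(1)] by blast
  define J where "J = (!) r ` {l..<h}"
  define e :: "real^'n" where "e = (\<chi> j. if j \<in> J then 0 else 1)"
  have "binary_vec e" unfolding e_def binary_vec_def by simp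
  then obtain S where S: "S \<in> Dr" "(\<Sum>j\<in>S. e $ j) < 1"
    using Dr gap unfolding e_def J_def by (auto simp: not_le)
  have "S \<subseteq> J"
  proof
    fix j assume j: "j \<in> S"
    have "e $ j \<le> (\<Sum>j\<in>S. e $ j)" using j by (intro member_le_sum) (auto simp: e_def)
    then show "j \<in> J" using S(2) unfolding e_def by (auto split: if_splits)
  qed
  then have "?t \<le> (\<Sum>j\<in>J. x $ j)"
    using covering_level_le_sum[OF S(1)] x01 sum_mono2[of J S] by (meson finite order_trans)
  also have "\<dots> = (\<Sum>k\<in>{l..<h}. x $ (r ! k))"
    unfolding J_def using lh r(2) by (subst sum.reindex) (auto intro!: inj_on_nth)
  finally have "1 \<le> (\<Sum>k\<in>{l..<h}. a (r ! k))"
    unfolding a_def using t x01 by (intro sum_min_one_div_ge_one) auto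
  then show False
    using systematic_rounding_hits_heavy_window[OF r(2) a lh] no_station by blast
qed

lemma unit_cube_convex_split:
  fixes x :: "real^'n::finite"
  assumes x: "x \<in> unit_cube" and t: "0 < t" "t \<le> 1"
  obtains y where "y \<in> unit_cube" "x = (1 - t) *\<^sub>R y + t *\<^sub>R (\<chi> j. min 1 (x $ j / t))"
proof
  define y :: "real^'n" where "y = (\<chi> j. max 0 (x $ j - t) / (1 - t))"
  have x01: "0 \<le> x $ j" "x $ j \<le> 1" for j using x unfolding unit_cube_def by auto
  show "y \<in> unit_cube"
  proof (cases "t = 1")
    case False
    then have "0 < 1 - t" using t by simp
    then show ?thesis unfolding y_def unit_cube_def using x01 by (auto simp: divide_le_eq max_def)
  qed (simp add: y_def unit_cube_def)
  show "x = (1 - t) *\<^sub>R y + t *\<^sub>R (\<chi> j. min 1 (x $ j / t))"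
  proof (rule vec_eq_iff[THEN iffD2], rule allI)
    fix j
    have "t * min 1 (x $ j / t) = min t (x $ j)" using t by (simp add: min_def field_simps)
    moreover have "(1 - t) * (max 0 (x $ j - t) / (1 - t)) = max 0 (x $ j - t)"
      using x01[of j] by (cases "t = 1") auto
    ultimately show "x $ j = ((1 - t) *\<^sub>R y + t *\<^sub>R (\<chi> j. min 1 (x $ j / t))) $ j"
      unfolding y_def by (simp add: max_def min_def)
  qed
qed

lemma simple_path_concave_ge_at_rescaling:
  fixes v :: "real^'n::finite \<Rightarrow> real" and Dr :: "'n set set"
  assumes r: "2 \<le> length r" "distinct r"
    and Dr: "\<forall>x'. binary_vec x' \<longrightarrow> (rep_traversable len d x' r \<longleftrightarrow> (\<forall>S\<in>Dr. 1 \<le> (\<Sum>j\<in>S. x' $ j)))"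
    and v: "concave_on unit_cube v" and v_binary: "\<forall>b. binary_vec b \<longrightarrow> v b = F * covering_level Dr b"
    and x: "x \<in> unit_cube" and t: "0 < covering_level Dr x"
  shows "F \<le> v (\<chi> j. min 1 (x $ j / covering_level Dr x))"
proof -
  define a where "a j = min 1 (x $ j / covering_level Dr x)" for j
  have a: "\<forall>j. 0 \<le> a j \<and> a j \<le> 1" using x t unfolding a_def unit_cube_def by auto
  have "F \<le> v (\<chi> j. a j)"
  proof (rule concave_on_unit_cube_hull_systematic_rounding[OF v a], rule ballI)
    fix u
    let ?b = "systematic_rounding (path_offset r a) a u"
    have b: "binary_vec ?b" by (rule binary_vec_systematic_rounding[OF a])
    have "rep_traversable len d ?b r"
      using rep_traversable_systematic_rounding[OF r Dr x t] unfolding a_def by blast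
    then have "covering_level Dr ?b = 1" using Dr b covering_level_eq_one by blast
    then show "F \<le> v ?b" using v_binary b by simp
  qed
  then show ?thesis unfolding a_def .
qed

lemma simple_path_concave_ge_covering_level:
  fixes v :: "real^'n::finite \<Rightarrow> real" and Dr :: "'n set set"
  assumes r: "2 \<le> length r" "distinct r"
    and Dr: "\<forall>x'. binary_vec x' \<longrightarrow> (rep_traversable len d x' r \<longleftrightarrow> (\<forall>S\<in>Dr. 1 \<le> (\<Sum>j\<in>S. x' $ j)))"
    and F: "0 \<le> F" and v: "concave_on unit_cube v"
    and v_binary: "\<forall>b. binary_vec b \<longrightarrow> v b = F * covering_level Dr b"
    and x: "x \<in> unit_cube"
  shows "F * covering_level Dr x \<le> v x"
proof -
  define t where "t = covering_level Dr x"
  have v_nonneg: "0 \<le> v y" if "y \<in> unit_cube" for y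
    using v_binary F covering_level_nonneg[OF binary_vec_in_unit_cube]
    by (intro concave_on_unit_cube_nonneg[OF v _ that]) (auto intro: mult_nonneg_nonneg)
  show ?thesis
  proof (cases "t = 0")
    case True
    then show ?thesis using v_nonneg[OF x] unfolding t_def by simp
  next
    case False
    then have t: "0 < t" "t \<le> 1"
      using covering_level_nonneg[OF x] covering_level_le_one unfolding t_def by (auto simp: order_le_less)
    define a :: "real^'n" where "a = (\<chi> j. min 1 (x $ j / t))"
    have a_cube: "a \<in> unit_cube" using x t unfolding a_def unit_cube_def by auto
    obtain y where y: "y \<in> unit_cube" "x = (1 - t) *\<^sub>R y + t *\<^sub>R a"
      using unit_cube_convex_split[OF x t] unfolding a_def by blast
    have "(1 - t) * v y + t * v a \<le> v x"
      using concave_onD[OF v, of t y a] t y a_cube by simp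
    moreover have "0 \<le> (1 - t) * v y" using v_nonneg[OF y(1)] t by simp
    moreover have "t * F \<le> t * v a"
      using simple_path_concave_ge_at_rescaling[OF r Dr v v_binary x] t unfolding a_def t_def by simp
    ultimately show ?thesis unfolding t_def by (simp add: mult.commute)
  qed
qed

lemma v_tight_eq_v_agg_simple_path:
  assumes r: "simple_path A r"
    and Dr: "\<forall>x'. binary_vec x' \<longrightarrow> (rep_traversable len d x' r \<longleftrightarrow> (\<forall>S\<in>D r. 1 \<le> (\<Sum>j\<in>S. x' $ j)))"
    and F: "0 \<le> F" and x: "x \<in> unit_cube"
  shows "v_tight F {r} D x = v_agg F {r} D x"
proof (rule v_tight_eq_v_agg[OF F])
  fix v assume v: "v \<in> K_set F {r} D"
  have "2 \<le> length r" "distinct r" using r unfolding simple_path_def is_path_def by auto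
  moreover have "concave_on unit_cube v" "\<forall>b. binary_vec b \<longrightarrow> v b = F * covering_level (D r) b"
    using v v_agg_eq_covering_level[OF F binary_vec_in_unit_cube, where R = "{r}" and D = D]
      agg_family_singleton[of r D]
    unfolding K_set_def by auto
  ultimately have "F * covering_level (D r) x \<le> v x"
    using simple_path_concave_ge_covering_level[OF _ _ Dr F _ _ x] by blast
  then show "v_agg F {r} D x \<le> v x"
    using v_agg_eq_covering_level[OF F x, where R = "{r}" and D = D] agg_family_singleton[of r D]
    by simp
qed

theorem proposition3:
  fixes A :: "('n::finite) set set" and len :: "'n set \<Rightarrow> real" and d :: real
    and Q :: "'q set" and f :: "'q \<Rightarrow> real" and R :: "'q \<Rightarrow> 'n list set"
    and D :: "'q \<Rightarrow> 'n list \<Rightarrow> 'n set set"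
    and q :: 'q and x :: "real^'n"
  assumes graph: "undirected_graph A"
    and d_pos: "d > 0"
    and lengths: "\<forall>e\<in>A. 0 < len e \<and> len e \<le> d"
    and Q_fin: "finite Q"
    and f_nonneg: "\<forall>q\<in>Q. f q \<ge> 0"
    and R_fin: "\<forall>q\<in>Q. finite (R q) \<and> R q \<noteq> {}"
    and R_paths: "\<forall>q\<in>Q. \<forall>r\<in>R q. is_path A r"
    and D_char: "\<forall>q\<in>Q. \<forall>r\<in>R q. \<forall>x'. binary_vec x' \<longrightarrow>
                   (rep_traversable len d x' r \<longleftrightarrow> (\<forall>S\<in>D q r. (\<Sum>j\<in>S. x' $ j) \<ge> 1))"
    and q: "q \<in> Q"
    and x: "x \<in> unit_cube"
  shows "(v_tight (f q) (R q) (D q) x \<le> v_agg (f q) (R q) (D q) x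
            \<and> v_agg (f q) (R q) (D q) x \<le> v_disagg (f q) (R q) (D q) x)
         \<and> ((\<exists>r. R q = {r}) \<longrightarrow>
              v_agg (f q) (R q) (D q) x = v_disagg (f q) (R q) (D q) x)
         \<and> ((\<exists>r. R q = {r} \<and> simple_path A r) \<longrightarrow>
              v_tight (f q) (R q) (D q) x = v_agg (f q) (R q) (D q) x
              \<and> v_agg (f q) (R q) (D q) x = v_disagg (f q) (R q) (D q) x)"
proof -
  define F where "F = f q"
  have F: "0 \<le> F" using f_nonneg q unfolding F_def by simp
  have R: "finite (R q)" using R_fin q by simp
  have bounds: "v_tight F (R q) (D q) x \<le> v_agg F (R q) (D q) x"
    "v_agg F (R q) (D q) x \<le> v_disagg F (R q) (D q) x"
    by (rule v_tight_le_v_agg[OF F x], rule v_agg_le_v_disagg[OF R F x])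
  have simple: "v_tight F {r} (D q) x = v_agg F {r} (D q) x" if "R q = {r}" "simple_path A r" for r
  proof (rule v_tight_eq_v_agg_simple_path[OF that(2) _ F x])
    show "\<forall>x'. binary_vec x' \<longrightarrow>
        (rep_traversable len d x' r \<longleftrightarrow> (\<forall>S\<in>D q r. 1 \<le> (\<Sum>j\<in>S. x' $ j)))"
      using D_char q that(1) by simp
  qed
  show ?thesis
    using bounds simple v_agg_eq_v_disagg_singleton[OF F x, where D = "D q"] unfolding F_def by auto
qed

end
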